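(* In the setting of the context, suppose Condition I holds: $ZR^i\in L^1$ for all $i\in\{1,\dots,d\}$ and all $Z\in\mathcal{Q}$. Then the set $C_{\mathcal{Q}}:=\{\mathbb{E}[-Z(R-r\mathbf{1})]:Z\in\mathcal{Q}\}$ is a convex subset of $\mathbb{R}^d$, and for every $\pi\in\mathbb{R}^d$, $\rho(X_\pi)=\sup_{c\in C_{\mathcal{Q}}}\pi\cdot c$. Moreover, $\rho$ satisfies the Fatou property on $\mathcal{X}=\{X_\pi:\pi\in\mathbb{R}^d\}$: if $X_n,X\in\mathcal{X}$, $X_n\to X$ a.s. and $|X_n|\le Y$ a.s. for some $Y\in L$, then $\rho(X)\le\liminf_n\rho(X_n)$.
   Context: Let $(\Omega,\mathcal{F},\mathbb{P})$ be a probability space and a market: riskless asset $S^0_0=1$, $S^0_1=1+r$, $r>-1$; risky assets $S^1,\dots,S^d$ with constants $S^i_0>0$ and real-valued $\mathcal{F}$-measurable $S^i_1$; returns $R^i:=(S^i_1-S^i_0)/S^i_0$, $R=(R^1,\dots,R^d)$. Standing assumptions: nonredundancy (if $\theta\in\mathbb{R}^{1+d}$ with $\sum_{i=0}^d\theta^iS^i_t=0$ a.s. for $t\in\{0,1\}$ then $\theta=0$), $R^i\in L^1$, $\mathbb{E}[R^i]\ne r$ for some $i$. Excess return: $X_\pi:=\pi\cdot(R-r\mathbf{1})$. $L$ is a Riesz space with $L^\infty\subset L\subset L^1$ containing all $X_\pi$. $\mathcal{D}:=\{Z\in L^1:Z\ge0,\mathbb{E}[Z]=1\}$; $\mathcal{Q}\subset\mathcal{D}$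 is convex with $1\in\mathcal{Q}$ and $\rho(X)=\sup_{Z\in\mathcal{Q}}\mathbb{E}[-ZX]$ on $L$, where $\mathbb{E}[-ZX]:=\mathbb{E}[ZX^-]-\mathbb{E}[ZX^+]$ with $\mathbb{E}[-ZX]=\infty$ if $\mathbb{E}[ZX^-]=\infty$. *)

theory Defs
  imports "HOL-Probability.Probability"
begin

text \<open>One-period market with d risky assets; the index type 'd (finite) plays the role of {1..d}.\<close>

definition returns :: "real^'d \<Rightarrow> ('a \<Rightarrow> real^'d) \<Rightarrow> 'a \<Rightarrow> real^'d" where
  "returns S0 S1 = (\<lambda>\<omega>. \<chi> i. (S1 \<omega> $ i - S0 $ i) / S0 $ i)"

definition excess_return :: "real \<Rightarrow> ('a \<Rightarrow> real^'d) \<Rightarrow> real^'d \<Rightarrow> 'a \<Rightarrow> real" where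
  "excess_return r R \<pi> = (\<lambda>\<omega>. \<pi> \<bullet> (R \<omega> - (\<chi> i. r)))"

text \<open>Nonredundancy of the assets (S^0_0 = 1, S^0_1 = 1 + r).\<close>
definition nonredundant :: "'a measure \<Rightarrow> real \<Rightarrow> real^'d \<Rightarrow> ('a \<Rightarrow> real^'d) \<Rightarrow> bool" where
  "nonredundant M r S0 S1 \<longleftrightarrow>
     (\<forall>(\<theta>0::real) (\<theta>::real^'d).
        \<theta>0 * 1 + \<theta> \<bullet> S0 = 0 \<and> (AE \<omega> in M. \<theta>0 * (1 + r) + \<theta> \<bullet> S1 \<omega> = 0)
        \<longrightarrow> \<theta>0 = 0 \<and> \<theta> = 0)"

definition riesz_between_Linf_L1 :: "'a measure \<Rightarrow> ('a \<Rightarrow> real) set \<Rightarrow> bool" where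
  "riesz_between_Linf_L1 M L \<longleftrightarrow>
     (\<forall>f\<in>L. integrable M f) \<and>
     (\<forall>f. f \<in> borel_measurable M \<and> (\<exists>C. AE x in M. \<bar>f x\<bar> \<le> C) \<longrightarrow> f \<in> L) \<and>
     (\<forall>f\<in>L. \<forall>g\<in>L. (\<lambda>x. f x + g x) \<in> L) \<and>
     (\<forall>f\<in>L. \<forall>c::real. (\<lambda>x. c * f x) \<in> L) \<and>
     (\<forall>f\<in>L. \<forall>g\<in>L. (\<lambda>x. max (f x) (g x)) \<in> L)"

definition densities :: "'a measure \<Rightarrow> ('a \<Rightarrow> real) set" where
  "densities M = {Z. integrable M Z \<and> (AE x in M. Z x \<ge> 0) \<and> integral\<^sup>L M Z = 1}"

definition neg_expect :: "'a measure \<Rightarrow> ('a \<Rightarrow> real) \<Rightarrow> ('a \<Rightarrow> real) \<Rightarrow> ereal" where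
  "neg_expect M Z X =
     (let a = (\<integral>\<^sup>+ x. ennreal (Z x * max 0 (- X x)) \<partial>M);
          b = (\<integral>\<^sup>+ x. ennreal (Z x * max 0 (X x)) \<partial>M)
      in if a = \<infinity> then \<infinity> else enn2ereal a - enn2ereal b)"

definition rho :: "'a measure \<Rightarrow> ('a \<Rightarrow> real) set \<Rightarrow> ('a \<Rightarrow> real) \<Rightarrow> ereal" where
  "rho M Q X = (SUP Z\<in>Q. neg_expect M Z X)"

text \<open>C_Q = {E[-Z(R - r 1)] : Z \<in> Q} (ordinary integrals under Condition I).\<close>
definition C_set :: "'a measure \<Rightarrow> ('a \<Rightarrow> real) set \<Rightarrow> real \<Rightarrow> ('a \<Rightarrow> real^'d) \<Rightarrow> (real^'d) set" where
  "C_set M Q r R = (\<lambda>Z. \<chi> i. integral\<^sup>L M (\<lambda>x. - (Z x * (R x $ i - r)))) ` Q"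

end

theory Submission
  imports Defs
begin

text \<open>
  Under Condition I the expectation E[-Z X_\<pi>] is an ordinary integral and linear in \<pi>:
  it equals \<pi> \<bullet> c(Z) with c(Z) = E[-Z(R - r 1)]. Hence \<rho>(X_\<pi>) is the support function
  of C_Q = c(Q), and C_Q is convex because c is affine on the convex set Q.

  For the Fatou property, dominated convergence gives X_(\<pi>_n) \<rightarrow> X_\<pi> in L^1. Nonredundancy
  makes \<pi> \<mapsto> E|X_\<pi>| a norm on R^d, hence equivalent to the Euclidean norm, so \<pi>_n \<rightarrow> \<pi>;
  and a supremum of continuous linear functionals is lower semicontinuous.
\<close>

lemma integrable_euclidean_componentwise:
  fixes D :: "'a \<Rightarrow> 'b::euclidean_space"
  assumes "\<And>b. b \<in> Basis \<Longrightarrow> integrable M (\<lambda>x. D x \<bullet> b)"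
  shows "integrable M D"
proof -
  have "integrable M (\<lambda>x. \<Sum>b\<in>Basis. (D x \<bullet> b) *\<^sub>R b)"
    using assms by auto
  then show ?thesis
    by (simp add: euclidean_representation)
qed

lemma continuous_on_integral_abs_inner:
  fixes D :: "'a \<Rightarrow> 'b::euclidean_space"
  assumes "integrable M D"
  shows "continuous_on UNIV (\<lambda>v. \<integral>\<omega>. \<bar>v \<bullet> D \<omega>\<bar> \<partial>M)"
proof -
  let ?K = "\<integral>\<omega>. norm (D \<omega>) \<partial>M"
  have diff_le: "(\<integral>\<omega>. \<bar>v \<bullet> D \<omega>\<bar> \<partial>M) - (\<integral>\<omega>. \<bar>w \<bullet> D \<omega>\<bar> \<partial>M) \<le> ?K * dist v w" for v w
  proof -
    have "(\<integral>\<omega>. \<bar>v \<bullet> D \<omega>\<bar> \<partial>M) - (\<integral>\<omega>. \<bar>w \<bullet> D \<omega>\<bar> \<partial>M)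
        = (\<integral>\<omega>. \<bar>v \<bullet> D \<omega>\<bar> - \<bar>w \<bullet> D \<omega>\<bar> \<partial>M)"
      using assms by simp
    also have "\<dots> \<le> (\<integral>\<omega>. dist v w * norm (D \<omega>) \<partial>M)"
    proof (rule integral_mono)
      fix \<omega>
      have "\<bar>v \<bullet> D \<omega>\<bar> - \<bar>w \<bullet> D \<omega>\<bar> \<le> \<bar>(v - w) \<bullet> D \<omega>\<bar>"
        by (simp add: inner_diff_left)
      also have "\<dots> \<le> dist v w * norm (D \<omega>)"
        by (simp add: dist_norm Cauchy_Schwarz_ineq2)
      finally show "\<bar>v \<bullet> D \<omega>\<bar> - \<bar>w \<bullet> D \<omega>\<bar> \<le> dist v w * norm (D \<omega>)" .
    qed (use assms in auto)
    finally show ?thesis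
      by (simp add: mult.commute)
  qed
  have "?K-lipschitz_on UNIV (\<lambda>v. \<integral>\<omega>. \<bar>v \<bullet> D \<omega>\<bar> \<partial>M)"
  proof (rule lipschitz_onI)
    fix v w :: 'b
    show "dist (\<integral>\<omega>. \<bar>v \<bullet> D \<omega>\<bar> \<partial>M) (\<integral>\<omega>. \<bar>w \<bullet> D \<omega>\<bar> \<partial>M) \<le> ?K * dist v w"
      using diff_le[of v w] diff_le[of w v] by (simp add: dist_real_def dist_commute)
  qed simp
  then show ?thesis
    by (rule lipschitz_on_continuous_on)
qed

lemma integral_abs_inner_bounded_below:
  fixes D :: "'a \<Rightarrow> 'b::euclidean_space"
  assumes "integrable M D" and nondegenerate: "\<And>v. AE \<omega> in M. v \<bullet> D \<omega> = 0 \<Longrightarrow> v = 0"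
  obtains m where "m > 0" and "\<And>v. m * norm v \<le> (\<integral>\<omega>. \<bar>v \<bullet> D \<omega>\<bar> \<partial>M)"
proof -
  define N where "N v = (\<integral>\<omega>. \<bar>v \<bullet> D \<omega>\<bar> \<partial>M)" for v
  have "continuous_on (sphere 0 1) N"
    unfolding N_def using continuous_on_integral_abs_inner[OF assms(1)]
    by (rule continuous_on_subset) simp
  then obtain u where u: "u \<in> sphere 0 1" and u_min: "\<And>w. w \<in> sphere 0 1 \<Longrightarrow> N u \<le> N w"
    using continuous_attains_inf[OF compact_sphere] by (metis sphere_eq_empty not_less zero_le_one)
  have "N u > 0"
  proof (rule ccontr)
    assume "\<not> N u > 0"
    then have "N u = 0"
      unfolding N_def by (simp add: order.antisym)
    then have "AE \<omega> in M. \<bar>u \<bullet> D \<omega>\<bar> = 0"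
      unfolding N_def using assms(1) by (subst (asm) integral_nonneg_eq_0_iff_AE) auto
    then have "u = 0"
      by (intro nondegenerate) simp
    then show False
      using u by simp
  qed
  moreover have "N u * norm v \<le> N v" for v
  proof (cases "v = 0")
    case False
    have "N u \<le> N (v /\<^sub>R norm v)"
      using False by (intro u_min) simp
    also have "\<dots> = N v / norm v"
      unfolding N_def by (simp add: abs_mult divide_inverse)
    finally show ?thesis
      using False by (simp add: field_simps)
  qed (simp add: N_def)
  ultimately show thesis
    using that unfolding N_def by blast
qed

lemma LIMSEQ_of_AE_tendsto_inner:
  fixes D :: "'a \<Rightarrow> 'b::euclidean_space" and vs :: "nat \<Rightarrow> 'b"
  assumes "integrable M D" and "\<And>v. AE \<omega> in M. v \<bullet> D \<omega> = 0 \<Longrightarrow> v = 0"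
    and "integrable M Y"
    and lim: "AE \<omega> in M. (\<lambda>n. vs n \<bullet> D \<omega>) \<longlonglongrightarrow> v \<bullet> D \<omega>"
    and bound: "\<And>n. AE \<omega> in M. \<bar>vs n \<bullet> D \<omega>\<bar> \<le> Y \<omega>"
  shows "vs \<longlonglongrightarrow> v"
proof -
  obtain m where "m > 0" and m: "\<And>v. m * norm v \<le> (\<integral>\<omega>. \<bar>v \<bullet> D \<omega>\<bar> \<partial>M)"
    using integral_abs_inner_bounded_below assms(1,2) by blast
  have "AE \<omega> in M. \<forall>n. \<bar>vs n \<bullet> D \<omega>\<bar> \<le> Y \<omega>"
    using bound by (simp add: AE_all_countable)
  with lim have bound_lim: "AE \<omega> in M. \<bar>v \<bullet> D \<omega>\<bar> \<le> Y \<omega>"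
  proof eventually_elim
    case (elim \<omega>)
    then show ?case
      by (intro LIMSEQ_le_const2[OF tendsto_rabs[OF elim(1)]]) auto
  qed
  have "(\<lambda>n. \<integral>\<omega>. \<bar>(vs n - v) \<bullet> D \<omega>\<bar> \<partial>M) \<longlonglongrightarrow> (\<integral>\<omega>. 0 \<partial>M)"
  proof (rule integral_dominated_convergence[where w = "\<lambda>\<omega>. 2 * Y \<omega>"])
    show "AE \<omega> in M. (\<lambda>n. \<bar>(vs n - v) \<bullet> D \<omega>\<bar>) \<longlonglongrightarrow> 0"
      using lim
    proof eventually_elim
      case (elim \<omega>)
      have "(\<lambda>n. \<bar>vs n \<bullet> D \<omega> - v \<bullet> D \<omega>\<bar>) \<longlonglongrightarrow> \<bar>v \<bullet> D \<omega> - v \<bullet> D \<omega>\<bar>"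
        by (intro tendsto_intros elim)
      then show ?case
        by (simp add: inner_diff_left)
    qed
    show "AE \<omega> in M. norm \<bar>(vs n - v) \<bullet> D \<omega>\<bar> \<le> 2 * Y \<omega>" for n
      using bound[of n] bound_lim by eventually_elim (simp add: inner_diff_left)
    show "(\<lambda>\<omega>. \<bar>(vs n - v) \<bullet> D \<omega>\<bar>) \<in> borel_measurable M" for n
      using borel_measurable_integrable[OF assms(1)] by measurable
  qed (use assms(3) in simp_all)
  then have L1_lim: "(\<lambda>n. (\<integral>\<omega>. \<bar>(vs n - v) \<bullet> D \<omega>\<bar> \<partial>M) / m) \<longlonglongrightarrow> 0"
    by (simp add: tendsto_divide_zero)
  have "(\<lambda>n. vs n - v) \<longlonglongrightarrow> 0"
  proof (rule Lim_null_comparison[OF _ L1_lim])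
    show "\<forall>\<^sub>F n in sequentially. norm (vs n - v) \<le> (\<integral>\<omega>. \<bar>(vs n - v) \<bullet> D \<omega>\<bar> \<partial>M) / m"
      using m \<open>m > 0\<close> by (intro always_eventually allI) (simp add: pos_le_divide_eq mult.commute)
  qed
  then show ?thesis
    by (rule LIM_zero_cancel)
qed

lemma SUP_inner_le_liminf:
  fixes C :: "'b::real_inner set"
  assumes "vs \<longlonglongrightarrow> v"
  shows "(SUP c\<in>C. ereal (v \<bullet> c)) \<le> liminf (\<lambda>n. SUP c\<in>C. ereal (vs n \<bullet> c))"
proof (rule SUP_least)
  fix c assume "c \<in> C"
  have "(\<lambda>n. ereal (vs n \<bullet> c)) \<longlonglongrightarrow> ereal (v \<bullet> c)"
    by (intro tendsto_intros assms)
  then have "ereal (v \<bullet> c) = liminf (\<lambda>n. ereal (vs n \<bullet> c))"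
    using lim_imp_Liminf by force
  also have "\<dots> \<le> liminf (\<lambda>n. SUP c\<in>C. ereal (vs n \<bullet> c))"
    using \<open>c \<in> C\<close> by (intro Liminf_mono always_eventually allI SUP_upper)
  finally show "ereal (v \<bullet> c) \<le> liminf (\<lambda>n. SUP c\<in>C. ereal (vs n \<bullet> c))" .
qed

lemma neg_expect_eq_integral:
  assumes "integrable M (\<lambda>x. Z x * X x)" and "AE x in M. 0 \<le> Z x"
  shows "neg_expect M Z X = ereal (\<integral>x. - (Z x * X x) \<partial>M)"
proof -
  have "AE x in M. ennreal (Z x * max 0 (- X x)) = ennreal (- (Z x * X x))
                 \<and> ennreal (Z x * max 0 (X x)) = ennreal (Z x * X x)"
    using assms(2) by eventually_elim (auto simp: max_def ennreal_neg mult_nonneg_nonpos)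
  then have neg_part: "(\<integral>\<^sup>+ x. ennreal (Z x * max 0 (- X x)) \<partial>M)
                        = (\<integral>\<^sup>+ x. ennreal (- (Z x * X x)) \<partial>M)"
    and pos_part: "(\<integral>\<^sup>+ x. ennreal (Z x * max 0 (X x)) \<partial>M)
                    = (\<integral>\<^sup>+ x. ennreal (Z x * X x) \<partial>M)"
    by (auto intro!: nn_integral_cong_AE)
  obtain p q where "0 \<le> p" "0 \<le> q"
    "(\<integral>\<^sup>+ x. ennreal (- (Z x * X x)) \<partial>M) = ennreal p"
    "(\<integral>\<^sup>+ x. ennreal (Z x * X x) \<partial>M) = ennreal q"
    "(\<integral>x. - (Z x * X x) \<partial>M) = p - q"
    by (rule integrableE[OF integrable_minus[OF assms(1)]]) auto
  then show ?thesis
    unfolding neg_expect_def Let_def neg_part pos_part by simp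
qed

lemma excess_return_AE_eq_0_imp_zero:
  fixes S0 :: "real^'d"
  assumes "nonredundant M r S0 S1" and "\<And>i. S0 $ i > 0"
    and "AE \<omega> in M. excess_return r (returns S0 S1) \<pi> \<omega> = 0"
  shows "\<pi> = 0"
proof -
  \<comment> \<open>The zero-cost portfolio with \<pi>_i / S0_i units of risky asset i has terminal value X_\<pi>.\<close>
  define \<theta> :: "real^'d" where "\<theta> = (\<chi> i. \<pi> $ i / S0 $ i)"
  define \<theta>0 where "\<theta>0 = - (\<theta> \<bullet> S0)"
  have "\<theta>0 * (1 + r) + \<theta> \<bullet> S1 \<omega> = excess_return r (returns S0 S1) \<pi> \<omega>" for \<omega>
  proof -
    have "\<theta>0 * (1 + r) + \<theta> \<bullet> S1 \<omega> = \<theta> \<bullet> (S1 \<omega> - (1 + r) *\<^sub>R S0)"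
      unfolding \<theta>0_def by (simp add: inner_diff_right algebra_simps)
    also have "\<dots> = \<pi> \<bullet> (returns S0 S1 \<omega> - (\<chi> i. r))"
      unfolding \<theta>_def returns_def inner_vec_def
      using assms(2) by (intro sum.cong) (auto simp: field_simps less_imp_neq[symmetric])
    finally show ?thesis
      by (simp add: excess_return_def)
  qed
  then have "AE \<omega> in M. \<theta>0 * (1 + r) + \<theta> \<bullet> S1 \<omega> = 0"
    using assms(3) by simp
  moreover have "\<theta>0 * 1 + \<theta> \<bullet> S0 = 0"
    by (simp add: \<theta>0_def)
  ultimately have "\<theta> = 0"
    using assms(1) unfolding nonredundant_def by blast
  then show "\<pi> = 0"
    using assms(2) by (simp add: \<theta>_def vec_eq_iff less_imp_neq[symmetric])
qed

lemma neg_expect_excess_return: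
  assumes "Z \<in> densities M" and "\<And>i. integrable M (\<lambda>x. Z x * (R x $ i - r))"
  shows "neg_expect M Z (excess_return r R \<pi>)
           = ereal (\<pi> \<bullet> (\<chi> i. \<integral>x. - (Z x * (R x $ i - r)) \<partial>M))"
proof -
  have weighted: "Z x * excess_return r R \<pi> x = (\<Sum>i\<in>UNIV. \<pi> $ i * (Z x * (R x $ i - r)))" for x
    by (simp add: excess_return_def inner_vec_def sum_distrib_left algebra_simps)
  have "integrable M (\<lambda>x. Z x * excess_return r R \<pi> x)"
    using assms(2) unfolding weighted by auto
  then have "neg_expect M Z (excess_return r R \<pi>) = ereal (\<integral>x. - (Z x * excess_return r R \<pi> x) \<partial>M)"
    using assms(1) unfolding densities_def by (intro neg_expect_eq_integral) auto
  also have "(\<integral>x. - (Z x * excess_return r R \<pi> x) \<partial>M)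
      = (\<Sum>i\<in>UNIV. \<pi> $ i * (\<integral>x. - (Z x * (R x $ i - r)) \<partial>M))"
    using assms(2) unfolding weighted by (simp add: sum_negf[symmetric])
  finally show ?thesis
    by (simp add: inner_vec_def)
qed

lemma rho_excess_return_eq_SUP_C_set:
  assumes "Q \<subseteq> densities M" and "\<And>Z i. Z \<in> Q \<Longrightarrow> integrable M (\<lambda>x. Z x * (R x $ i - r))"
  shows "rho M Q (excess_return r R \<pi>) = (SUP c\<in>C_set M Q r R. ereal (\<pi> \<bullet> c))"
  unfolding rho_def C_set_def image_image
  using assms by (intro SUP_cong refl neg_expect_excess_return) auto

lemma convex_C_set:
  assumes convex_Q: "\<And>Z1 Z2 t. Z1 \<in> Q \<Longrightarrow> Z2 \<in> Q \<Longrightarrow> 0 \<le> t \<Longrightarrow> t \<le> 1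
             \<Longrightarrow> (\<lambda>x. t * Z1 x + (1 - t) * Z2 x) \<in> Q"
    and integrable: "\<And>Z i. Z \<in> Q \<Longrightarrow> integrable M (\<lambda>x. Z x * (R x $ i - r))"
  shows "convex (C_set M Q r R)"
proof -
  define c where "c = (\<lambda>Z. \<chi> i. \<integral>x. - (Z x * (R x $ i - r)) \<partial>M)"
  have affine: "(1 - t) *\<^sub>R c Z1 + t *\<^sub>R c Z2 = c (\<lambda>x. t * Z2 x + (1 - t) * Z1 x)"
    if "Z1 \<in> Q" "Z2 \<in> Q" for Z1 Z2 t
  proof (unfold vec_eq_iff, intro allI)
    fix i
    have "(\<lambda>x. (t * Z2 x + (1 - t) * Z1 x) * (R x $ i - r))
        = (\<lambda>x. t * (Z2 x * (R x $ i - r)) + (1 - t) * (Z1 x * (R x $ i - r)))"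
      by (simp add: fun_eq_iff algebra_simps)
    then show "((1 - t) *\<^sub>R c Z1 + t *\<^sub>R c Z2) $ i = c (\<lambda>x. t * Z2 x + (1 - t) * Z1 x) $ i"
      using integrable[OF that(1), of i] integrable[OF that(2), of i] by (simp add: c_def)
  qed
  have "convex (c ` Q)"
    unfolding convex_alt using convex_Q by (auto simp: affine)
  then show ?thesis
    by (simp add: C_set_def c_def)
qed

lemma LIMSEQ_of_AE_tendsto_excess_return:
  fixes S0 :: "real^'d" and \<pi>s :: "nat \<Rightarrow> real^'d"
  assumes "finite_measure M" and "nonredundant M r S0 S1" and "\<And>i. S0 $ i > 0"
    and "\<And>i. integrable M (\<lambda>\<omega>. returns S0 S1 \<omega> $ i)" and "integrable M Y"
    and "AE \<omega> in M. (\<lambda>n. excess_return r (returns S0 S1) (\<pi>s n) \<omega>)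
                      \<longlonglongrightarrow> excess_return r (returns S0 S1) \<pi> \<omega>"
    and "\<And>n. AE \<omega> in M. \<bar>excess_return r (returns S0 S1) (\<pi>s n) \<omega>\<bar> \<le> Y \<omega>"
  shows "\<pi>s \<longlonglongrightarrow> \<pi>"
proof -
  interpret finite_measure M
    by (fact assms(1))
  define D where "D \<omega> = returns S0 S1 \<omega> - (\<chi> i. r)" for \<omega>
  have inner_D: "excess_return r (returns S0 S1) v \<omega> = v \<bullet> D \<omega>" for v \<omega>
    by (simp add: excess_return_def D_def)
  have "integrable M D"
  proof (rule integrable_euclidean_componentwise)
    fix b :: "real^'d"
    assume "b \<in> Basis"
    then obtain i where "b = axis i 1"
      by (auto simp: Basis_vec_def)
    then show "integrable M (\<lambda>x. D x \<bullet> b)"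
      using assms(4) by (simp add: inner_axis D_def)
  qed
  moreover have "v = 0" if "AE \<omega> in M. v \<bullet> D \<omega> = 0" for v
    using excess_return_AE_eq_0_imp_zero[OF assms(2,3)] that by (simp add: inner_D)
  ultimately show ?thesis
    using assms(5-7) unfolding inner_D by (rule LIMSEQ_of_AE_tendsto_inner)
qed

theorem proposition4p3:
  fixes M :: "'a measure" and r :: real and S0 :: "real^'d" and S1 :: "'a \<Rightarrow> real^'d"
    and L :: "('a \<Rightarrow> real) set" and Q :: "('a \<Rightarrow> real) set"
  assumes "prob_space M"
    and "r > -1"
    and "\<forall>i. S0 $ i > 0"
    and "\<forall>i. (\<lambda>\<omega>. S1 \<omega> $ i) \<in> borel_measurable M"
    and "nonredundant M r S0 S1"
    and "\<forall>i. integrable M (\<lambda>\<omega>. returns S0 S1 \<omega> $ i)"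
    and "\<exists>i. integral\<^sup>L M (\<lambda>\<omega>. returns S0 S1 \<omega> $ i) \<noteq> r"
    and "riesz_between_Linf_L1 M L"
    and "\<forall>\<pi>. excess_return r (returns S0 S1) \<pi> \<in> L"
    and "Q \<subseteq> densities M"
    and "\<forall>Z1\<in>Q. \<forall>Z2\<in>Q. \<forall>t::real. 0 \<le> t \<and> t \<le> 1 \<longrightarrow> (\<lambda>x. t * Z1 x + (1 - t) * Z2 x) \<in> Q"
    and "(\<lambda>_. 1) \<in> Q"
    and condI: "\<forall>Z\<in>Q. \<forall>i. integrable M (\<lambda>\<omega>. Z \<omega> * returns S0 S1 \<omega> $ i)"
  shows "convex (C_set M Q r (returns S0 S1))
    \<and> (\<forall>\<pi>. rho M Q (excess_return r (returns S0 S1) \<pi>)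
            = (SUP c\<in>C_set M Q r (returns S0 S1). ereal (\<pi> \<bullet> c)))
    \<and> (\<forall>(\<pi>s :: nat \<Rightarrow> real^'d) \<pi> Y.
          Y \<in> L
          \<longrightarrow> (AE \<omega> in M. (\<lambda>n. excess_return r (returns S0 S1) (\<pi>s n) \<omega>)
                             \<longlonglongrightarrow> excess_return r (returns S0 S1) \<pi> \<omega>)
          \<longrightarrow> (\<forall>n. AE \<omega> in M. \<bar>excess_return r (returns S0 S1) (\<pi>s n) \<omega>\<bar> \<le> Y \<omega>)
          \<longrightarrow> rho M Q (excess_return r (returns S0 S1) \<pi>)
              \<le> liminf (\<lambda>n. rho M Q (excess_return r (returns S0 S1) (\<pi>s n))))"
proof -
  have weighted_returns_integrable: "integrable M (\<lambda>x. Z x * (returns S0 S1 x $ i - r))"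
    if "Z \<in> Q" for Z i
  proof -
    have "integrable M (\<lambda>x. Z x * returns S0 S1 x $ i - r * Z x)"
      using condI \<open>Z \<in> Q\<close> assms(10) by (auto simp: densities_def)
    then show ?thesis
      by (simp add: algebra_simps)
  qed
  have rho_eq: "rho M Q (excess_return r (returns S0 S1) \<pi>)
      = (SUP c\<in>C_set M Q r (returns S0 S1). ereal (\<pi> \<bullet> c))" for \<pi>
    using assms(10) weighted_returns_integrable by (rule rho_excess_return_eq_SUP_C_set)
  have convex_C: "convex (C_set M Q r (returns S0 S1))"
    using assms(11) by (intro convex_C_set weighted_returns_integrable) blast+
  have fatou: "rho M Q (excess_return r (returns S0 S1) \<pi>)
      \<le> liminf (\<lambda>n. rho M Q (excess_return r (returns S0 S1) (\<pi>s n)))"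
    if "Y \<in> L"
      and "AE \<omega> in M. (\<lambda>n. excess_return r (returns S0 S1) (\<pi>s n) \<omega>)
                        \<longlonglongrightarrow> excess_return r (returns S0 S1) \<pi> \<omega>"
      and "\<forall>n. AE \<omega> in M. \<bar>excess_return r (returns S0 S1) (\<pi>s n) \<omega>\<bar> \<le> Y \<omega>" for \<pi>s \<pi> Y
  proof -
    have "integrable M Y"
      using \<open>Y \<in> L\<close> assms(8) by (simp add: riesz_between_Linf_L1_def)
    then have "\<pi>s \<longlonglongrightarrow> \<pi>"
      using prob_space.axioms(1)[OF assms(1)] assms(3,5,6) that(2,3)
      by (intro LIMSEQ_of_AE_tendsto_excess_return) auto
    then show ?thesis
      unfolding rho_eq by (rule SUP_inner_le_liminf)
  qed
  show ?thesis
    using convex_C rho_eq fatou by simp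
qed

end
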